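(* Let $\Lambda$ be a locally finite $k$-graph with no sources or sinks, let $\{s_\lambda\}$ be the universal Cuntz–Krieger $\Lambda$-family in $C^*(\Lambda)$, and let $D=\mathrm{span}\{s_\lambda s_\lambda^*:\lambda\in\Lambda\}$. For $a\in D$ and $p\in\mathbb{N}^k$, there are only finitely many $\eta\in\Lambda^p$ with $s_\eta a s_\eta^*\ne0$. Define $\Phi_p:D\to D$ by $\Phi_p(a)=\sum_{\eta\in\Lambda^p}s_\eta a s_\eta^*$. Then $\|\Phi_p(a)\|=\|a\|$ for all $a\in D$, $\Phi_p$ extends to an endomorphism (also denoted $\Phi_p$) of $\overline D$, and $p\mapsto\Phi_p$ is an action of $\mathbb{N}^k$ on $\overline D$ by endomorphisms.
   Context: A $k$-graph is a countable category $\Lambda$ with a functor $d:\Lambda\to\mathbb{N}^k$ with unique factorisation; vertices are degree-$0$ morphisms; $\Lambda^p=d^{-1}(p)$. $\Lambda$ is locally finite with no sources or sinks if for every $p\in\mathbb{N}^k$ and vertex $v$, $v\Lambda^p=\Lambda^p\cap r^{-1}(v)$ and $\Lambda^pv=\Lambda^p\cap s^{-1}(v)$ are finite and nonempty. $C^*(\Lambda)$ is the universal $C^*$-algebra generated by partial isometries $\{s_\lambda\}$ with $\{s_v\}$ mutually orthogonal projections, $s_\mu s_\nu=s_{\mu\nu}$ when $s(\mu)=r(\nu)$, $s_\mu^*s_\nu=\sum s_\xi s_\eta^*$ over pairs $(\xi,\eta)$ with $\mu\xi=\nu\eta$ of degree $d(\mu)\vee d(\nu)$, and $s_v=\sum_{\lambda\in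 v\Lambda^n}s_\lambda s_\lambda^*$ for all $v$ and $n$. $\overline D$ is the closure of $D$. *)

theory Defs
  imports "HOL-Analysis.Analysis"
begin

text \<open>Complex scalar multiplication is
provided explicitly (HOL only has real vector spaces), compatible with the
real scalar multiplication.\<close>

class cstar_algebra = real_normed_algebra + banach +
  fixes scaleC :: "complex \<Rightarrow> 'a \<Rightarrow> 'a"
    and invol :: "'a \<Rightarrow> 'a"
  assumes scaleC_add_right: "scaleC c (x + y) = scaleC c x + scaleC c y"
    and scaleC_add_left: "scaleC (b + c) x = scaleC b x + scaleC c x"
    and scaleC_scaleC: "scaleC b (scaleC c x) = scaleC (b * c) x"
    and scaleC_one: "scaleC 1 x = x"
    and scaleR_scaleC: "scaleR r x = scaleC (of_real r) x"
    and norm_scaleC: "norm (scaleC c x) = cmod c * norm x"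
    and scaleC_mult_left: "scaleC c x * y = scaleC c (x * y)"
    and scaleC_mult_right: "x * scaleC c y = scaleC c (x * y)"
    and invol_invol: "invol (invol x) = x"
    and invol_add: "invol (x + y) = invol x + invol y"
    and invol_scaleC: "invol (scaleC c x) = scaleC (cnj c) (invol x)"
    and invol_mult: "invol (x * y) = invol y * invol x"
    and cstar_identity: "norm (invol x * x) = (norm x)\<^sup>2"

definition star_hom_on :: "'a::cstar_algebra set \<Rightarrow> ('a \<Rightarrow> 'b::cstar_algebra) \<Rightarrow> bool" where
  "star_hom_on S f \<longleftrightarrow>
     (\<forall>x\<in>S. \<forall>y\<in>S. f (x + y) = f x + f y) \<and>
     (\<forall>c. \<forall>x\<in>S. f (scaleC c x) = scaleC c (f x)) \<and>
     (\<forall>x\<in>S. \<forall>y\<in>S. f (x * y) = f x * f y) \<and>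
     (\<forall>x\<in>S. f (invol x) = invol (f x))"

definition cstar_generated_by :: "'a::cstar_algebra set \<Rightarrow> bool" where
  "cstar_generated_by G \<longleftrightarrow>
     (\<forall>T. G \<subseteq> T \<and> closed T \<and> 0 \<in> T \<and>
          (\<forall>x\<in>T. \<forall>y\<in>T. x + y \<in> T \<and> x * y \<in> T) \<and>
          (\<forall>c. \<forall>x\<in>T. scaleC c x \<in> T) \<and> (\<forall>x\<in>T. invol x \<in> T)
        \<longrightarrow> T = UNIV)"

text \<open>A k-graph is given by its (countable) set of morphisms L, range and
source maps rng, src (the objects being identified with the identity
morphisms), a composition cmp (cmp mu nu is meant for src mu = rng nu), and
a degree functor d into N^k, where N^k is modelled as 'k => nat for a
finite type 'k with k = CARD('k).\<close>

definition is_kgraph ::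
  "'m set \<Rightarrow> ('m \<Rightarrow> 'm) \<Rightarrow> ('m \<Rightarrow> 'm) \<Rightarrow> ('m \<Rightarrow> 'm \<Rightarrow> 'm) \<Rightarrow> ('m \<Rightarrow> ('k::finite \<Rightarrow> nat)) \<Rightarrow> bool"
where
  "is_kgraph L rng src cmp d \<longleftrightarrow>
     countable L \<and>
     (\<forall>l\<in>L. rng l \<in> L \<and> src l \<in> L) \<and>
     (\<forall>l\<in>L. rng (rng l) = rng l \<and> src (rng l) = rng l \<and>
             rng (src l) = src l \<and> src (src l) = src l) \<and>
     (\<forall>l\<in>L. cmp (rng l) l = l \<and> cmp l (src l) = l) \<and>
     (\<forall>mu\<in>L. \<forall>nu\<in>L. src mu = rng nu \<longrightarrow>
         cmp mu nu \<in> L \<and> rng (cmp mu nu) = rng mu \<and> src (cmp mu nu) = src nu) \<and>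
     (\<forall>a\<in>L. \<forall>b\<in>L. \<forall>c\<in>L. src a = rng b \<and> src b = rng c \<longrightarrow>
         cmp (cmp a b) c = cmp a (cmp b c)) \<and>
     (\<forall>l\<in>L. d (rng l) = (\<lambda>_. 0) \<and> d (src l) = (\<lambda>_. 0)) \<and>
     (\<forall>mu\<in>L. \<forall>nu\<in>L. src mu = rng nu \<longrightarrow> d (cmp mu nu) = (\<lambda>i. d mu i + d nu i)) \<and>
     (\<forall>l\<in>L. \<forall>m n. d l = (\<lambda>i. m i + n i) \<longrightarrow>
         (\<exists>!(mu, nu). mu \<in> L \<and> nu \<in> L \<and> src mu = rng nu \<and> cmp mu nu = l \<and>
                       d mu = m \<and> d nu = n))"

definition vertices :: "'m set \<Rightarrow> ('m \<Rightarrow> ('k \<Rightarrow> nat)) \<Rightarrow> 'm set" where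
  "vertices L d = {v \<in> L. d v = (\<lambda>_. 0)}"

definition locally_finite_no_sources_sinks ::
  "'m set \<Rightarrow> ('m \<Rightarrow> 'm) \<Rightarrow> ('m \<Rightarrow> 'm) \<Rightarrow> ('m \<Rightarrow> ('k \<Rightarrow> nat)) \<Rightarrow> bool" where
  "locally_finite_no_sources_sinks L rng src d \<longleftrightarrow>
     (\<forall>v\<in>vertices L d. \<forall>p.
        finite {l \<in> L. d l = p \<and> rng l = v} \<and> {l \<in> L. d l = p \<and> rng l = v} \<noteq> {} \<and>
        finite {l \<in> L. d l = p \<and> src l = v} \<and> {l \<in> L. d l = p \<and> src l = v} \<noteq> {})"

definition min_ext ::
  "'m set \<Rightarrow> ('m \<Rightarrow> 'm) \<Rightarrow> ('m \<Rightarrow> 'm) \<Rightarrow> ('m \<Rightarrow> 'm \<Rightarrow> 'm) \<Rightarrow> ('m \<Rightarrow> ('k \<Rightarrow> nat))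
   \<Rightarrow> 'm \<Rightarrow> 'm \<Rightarrow> ('m \<times> 'm) set" where
  "min_ext L rng src cmp d mu nu =
     {(xi, eta). xi \<in> L \<and> eta \<in> L \<and> src mu = rng xi \<and> src nu = rng eta \<and>
                 cmp mu xi = cmp nu eta \<and> d (cmp mu xi) = sup (d mu) (d nu)}"

definition CK_family ::
  "'m set \<Rightarrow> ('m \<Rightarrow> 'm) \<Rightarrow> ('m \<Rightarrow> 'm) \<Rightarrow> ('m \<Rightarrow> 'm \<Rightarrow> 'm) \<Rightarrow> ('m \<Rightarrow> ('k \<Rightarrow> nat))
   \<Rightarrow> ('m \<Rightarrow> 'a::cstar_algebra) \<Rightarrow> bool" where
  "CK_family L rng src cmp d t \<longleftrightarrow>
     (\<forall>l\<in>L. t l * invol (t l) * t l = t l) \<and>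
     (\<forall>v\<in>vertices L d. invol (t v) = t v \<and> t v * t v = t v) \<and>
     (\<forall>v\<in>vertices L d. \<forall>w\<in>vertices L d. v \<noteq> w \<longrightarrow> t v * t w = 0) \<and>
     (\<forall>mu\<in>L. \<forall>nu\<in>L. src mu = rng nu \<longrightarrow> t mu * t nu = t (cmp mu nu)) \<and>
     (\<forall>mu\<in>L. \<forall>nu\<in>L. invol (t mu) * t nu =
        (\<Sum>(xi, eta)\<in>min_ext L rng src cmp d mu nu. t xi * invol (t eta))) \<and>
     (\<forall>v\<in>vertices L d. \<forall>n. t v = (\<Sum>l\<in>{l \<in> L. rng l = v \<and> d l = n}. t l * invol (t l)))"

definition universal_CK_family ::
  "'b::cstar_algebra itself \<Rightarrow> 'm set \<Rightarrow> ('m \<Rightarrow> 'm) \<Rightarrow> ('m \<Rightarrow> 'm) \<Rightarrow> ('m \<Rightarrow> 'm \<Rightarrow> 'm)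
   \<Rightarrow> ('m \<Rightarrow> ('k \<Rightarrow> nat)) \<Rightarrow> ('m \<Rightarrow> 'a::cstar_algebra) \<Rightarrow> bool" where
  "universal_CK_family (_ :: 'b itself) L rng src cmp d s \<longleftrightarrow>
     CK_family L rng src cmp d s \<and>
     cstar_generated_by (s ` L) \<and>
     (\<forall>t :: 'm \<Rightarrow> 'b. CK_family L rng src cmp d t \<longrightarrow>
        (\<exists>pi. star_hom_on UNIV pi \<and> (\<forall>l\<in>L. pi (s l) = t l)))"

definition diag_span ::
  "'m set \<Rightarrow> ('m \<Rightarrow> 'a::cstar_algebra) \<Rightarrow> 'a set" where
  "diag_span L s = {(\<Sum>l\<in>F. scaleC (c l) (s l * invol (s l))) | F c. finite F \<and> F \<subseteq> L}"

text \<open>Phi_p(a) = sum over eta in Lambda^p of s_eta a s_eta^* (only the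
finitely many nonzero terms are summed).\<close>
definition Phi ::
  "'m set \<Rightarrow> ('m \<Rightarrow> ('k \<Rightarrow> nat)) \<Rightarrow> ('m \<Rightarrow> 'a::cstar_algebra) \<Rightarrow> ('k \<Rightarrow> nat) \<Rightarrow> 'a \<Rightarrow> 'a" where
  "Phi L d s p a = (\<Sum>eta\<in>{eta \<in> L. d eta = p \<and> s eta * a * invol (s eta) \<noteq> 0}.
                      s eta * a * invol (s eta))"

end

theory Submission
  imports Defs
begin

text \<open>An element a of D = span {s l s l*} lives under finitely many vertex projections s v,
  v \<in> V, so only the finitely many paths e of degree p with source in V contribute to
  Phi p a = \<Sum> s e a s e*. Distinct paths of equal degree satisfy s e* s f = 0, which makes
  Phi p multiplicative, and contractive because the norm of a sum of mutually orthogonal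
  elements is the largest norm of a summand. Conversely, having no sources, every v \<in> V is the
  source of a path e of degree p, and s e* (Phi p a) s e = s v a s v; hence Phi p is isometric.
  Unique factorisation gives Phi (p + q) = Phi p \<circ> Phi q. Being isometric *-homomorphisms, the
  Phi p extend continuously to the closure of D, and all identities persist by density.\<close>

context cstar_algebra
begin

lemma invol_zero [simp]: "invol 0 = 0"
  using invol_add[of 0 0] by simp

lemma invol_sum: "invol (sum f A) = (\<Sum>i\<in>A. invol (f i))"
  by (induction A rule: infinite_finite_induct) (auto simp: invol_add)

lemma scaleC_zero_right [simp]: "scaleC c 0 = 0"
  using norm_scaleC[of c 0] by simp

lemma scaleC_zero_left [simp]: "scaleC 0 x = 0"
  using norm_scaleC[of 0 x] by simp

lemma scaleC_sum: "scaleC c (sum f A) = (\<Sum>i\<in>A. scaleC c (f i))"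
  by (induction A rule: infinite_finite_induct) (auto simp: scaleC_add_right)

lemma scaleC_minus_one: "scaleC (-1) x = - x"
proof -
  have "scaleC (-1) x + x = 0"
    using scaleC_add_left[of "-1" 1 x] by (simp add: scaleC_one)
  then show ?thesis
    by (metis add.commute minus_unique)
qed

lemma norm_invol [simp]: "norm (invol x) = norm x"
proof -
  have le: "norm y \<le> norm (invol y)" for y
  proof (cases "y = 0")
    case False
    have "(norm y)\<^sup>2 \<le> norm (invol y) * norm y"
      using cstar_identity[of y] norm_mult_ineq[of "invol y" y] by simp
    then show ?thesis
      using False by (simp add: power2_eq_square)
  qed simp
  show ?thesis
    using le[of x] le[of "invol x"] by (simp add: invol_invol)
qed

lemma norm_projection_le_one:
  assumes "invol p = p" and "p * p = p"
  shows "norm p \<le> 1"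
proof -
  have "norm p * norm p = norm p * 1"
    using cstar_identity[of p] assms by (simp add: power2_eq_square)
  then have "norm p = 0 \<or> norm p = 1"
    by (metis mult_left_cancel)
  then show ?thesis
    by linarith
qed

lemma norm_partial_isometry_le_one:
  assumes "invol p = p" and "p * p = p" and "invol x * x = p"
  shows "norm x \<le> 1"
proof -
  have "(norm x)\<^sup>2 \<le> 1\<^sup>2"
    using cstar_identity[of x] norm_projection_le_one[OF assms(1,2)] assms(3) by simp
  then show ?thesis
    by (rule power2_le_imp_le) simp
qed

lemma norm_conj_le:
  assumes "norm x \<le> 1"
  shows "norm (x * a * invol x) \<le> norm a"
proof -
  have "norm (x * a * invol x) \<le> norm x * norm a * norm (invol x)"
    by (metis norm_mult_ineq mult_right_mono norm_ge_zero order_trans)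
  also have "\<dots> \<le> 1 * norm a * 1"
    using assms by (intro mult_mono) auto
  finally show ?thesis
    by simp
qed

end

lemma bounded_linear_scaleC: "bounded_linear (scaleC c :: 'a::cstar_algebra \<Rightarrow> 'a)"
proof (rule bounded_linear_intro[where K = "cmod c"])
  show "scaleC c (scaleR r x) = scaleR r (scaleC c x)" for r and x :: 'a
    by (simp add: scaleR_scaleC scaleC_scaleC mult.commute)
qed (simp_all add: scaleC_add_right norm_scaleC mult.commute)

lemma bounded_linear_invol: "bounded_linear (invol :: 'a::cstar_algebra \<Rightarrow> 'a)"
  by (rule bounded_linear_intro[where K = 1]) (simp_all add: invol_add scaleR_scaleC invol_scaleC)

section \<open>Norms of orthogonal sums\<close>

fun square_iter :: "nat \<Rightarrow> 'a::cstar_algebra \<Rightarrow> 'a" where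
  "square_iter 0 x = x"
| "square_iter (Suc k) x = square_iter k x * square_iter k x"

lemma square_iter_add_orthogonal:
  fixes u w :: "'a::cstar_algebra"
  assumes "u * w = 0" and "w * u = 0"
  shows "square_iter k (u + w) = square_iter k u + square_iter k w
    \<and> square_iter k u * square_iter k w = 0 \<and> square_iter k w * square_iter k u = 0"
proof (induction k)
  case (Suc k)
  then have uw: "square_iter k u * square_iter k w = 0" "square_iter k w * square_iter k u = 0"
    and add: "square_iter k (u + w) = square_iter k u + square_iter k w"
    by auto
  have "square_iter (Suc k) u * square_iter (Suc k) w
      = square_iter k u * (square_iter k u * square_iter k w) * square_iter k w"
    "square_iter (Suc k) w * square_iter (Suc k) u
      = square_iter k w * (square_iter k w * square_iter k u) * square_iter k u"
    by (simp_all add: mult.assoc)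
  then show ?case
    using uw by (simp add: add algebra_simps)
qed (use assms in simp)

lemma square_iter_sum_orthogonal:
  fixes h :: "'i \<Rightarrow> 'a::cstar_algebra"
  assumes "finite I" and "\<And>i j. i \<in> I \<Longrightarrow> j \<in> I \<Longrightarrow> i \<noteq> j \<Longrightarrow> h i * h j = 0"
  shows "square_iter k (sum h I) = (\<Sum>i\<in>I. square_iter k (h i))"
  using assms
proof (induction I rule: finite_induct)
  case empty
  have "square_iter k 0 = (0::'a)"
    by (induction k) auto
  then show ?case
    by simp
next
  case (insert j A)
  have "h j * sum h A = 0" "sum h A * h j = 0"
    using insert by (auto simp: sum_distrib_left sum_distrib_right intro!: sum.neutral)
  then show ?case
    using insert square_iter_add_orthogonal[of "h j" "sum h A" k] by simp
qed

lemma square_iter_selfadjoint: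
  fixes h :: "'a::cstar_algebra"
  assumes "invol h = h"
  shows "invol (square_iter k h) = square_iter k h \<and> norm (square_iter k h) = norm h ^ (2 ^ k)"
proof (induction k)
  case (Suc k)
  then have "norm (square_iter (Suc k) h) = (norm h ^ (2 ^ k))\<^sup>2"
    using cstar_identity[of "square_iter k h"] by simp
  then show ?case
    using Suc by (simp add: invol_mult power_mult[symmetric] mult.commute)
qed (use assms in simp)

lemma pow_pow2_not_dominated:
  fixes a b N :: real
  assumes "0 \<le> b" and "b < a" and "\<And>k. a ^ (2 ^ k) \<le> N * b ^ (2 ^ k)"
  shows False
proof (cases "b = 0")
  case True
  then show ?thesis
    using assms(2) assms(3)[of 0] by simp
next
  case False
  then have b: "b > 0" and r: "a / b > 1"
    using assms by simp_all
  obtain n where n: "N < (a / b) ^ n"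
    using real_arch_pow[OF r] by blast
  have "(a / b) ^ n \<le> (a / b) ^ (2 ^ n)"
    using r by (intro power_increasing) (simp_all add: less_imp_le)
  also have "\<dots> \<le> N"
    using assms(3)[of n] b by (simp add: power_divide divide_le_eq)
  finally show False
    using n by simp
qed

text \<open>The C*-identity turns the bound into one for the self-adjoint element y* y, again a
  sum of mutually orthogonal summands; comparing the growth of the norms of its 2^k-th powers
  (which are multiplicative for self-adjoint elements) yields the claim.\<close>
lemma norm_sum_orthogonal_le:
  fixes x :: "'i \<Rightarrow> 'a::cstar_algebra"
  assumes "finite I" and "0 \<le> M" and bound: "\<And>i. i \<in> I \<Longrightarrow> norm (x i) \<le> M"
    and orth: "\<And>i j. i \<in> I \<Longrightarrow> j \<in> I \<Longrightarrow> i \<noteq> j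
                  \<Longrightarrow> invol (x i) * x j = 0 \<and> x i * invol (x j) = 0"
  shows "norm (sum x I) \<le> M"
proof (rule ccontr)
  assume "\<not> norm (sum x I) \<le> M"
  define y where "y = sum x I"
  define h where "h i = invol (x i) * x i" for i
  have "invol y * y = (\<Sum>i\<in>I. \<Sum>j\<in>I. invol (x i) * x j)"
    unfolding y_def invol_sum sum_product by simp
  also have "\<dots> = sum h I"
  proof (rule sum.cong[OF refl])
    fix i assume "i \<in> I"
    then have "(\<Sum>j\<in>I. invol (x i) * x j) = (\<Sum>j\<in>I. if j = i then h i else 0)"
      using orth by (intro sum.cong) (auto simp: h_def)
    then show "(\<Sum>j\<in>I. invol (x i) * x j) = h i"
      using \<open>i \<in> I\<close> assms(1) by simp
  qed
  finally have yy: "invol y * y = sum h I" .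
  have orth_h: "h i * h j = 0" if "i \<in> I" "j \<in> I" "i \<noteq> j" for i j
  proof -
    have "h i * h j = invol (x i) * (x i * invol (x j)) * x j"
      by (simp add: h_def mult.assoc)
    then show ?thesis
      using orth[OF that] by simp
  qed
  have sa_h: "invol (h i) = h i" for i
    by (simp add: h_def invol_mult invol_invol)
  have norm_h: "norm (h i) \<le> M ^ 2" if "i \<in> I" for i
    using cstar_identity[of "x i"] bound[OF that] by (simp add: h_def power_mono)
  have "(norm y ^ 2) ^ (2 ^ k) \<le> real (card I) * (M ^ 2) ^ (2 ^ k)" for k
  proof -
    have "(norm y ^ 2) ^ (2 ^ k) = norm (square_iter k (sum h I))"
      using square_iter_selfadjoint[of "sum h I" k] yy cstar_identity[of y]
      by (simp add: invol_sum sa_h)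
    also have "\<dots> = norm (\<Sum>i\<in>I. square_iter k (h i))"
      using square_iter_sum_orthogonal[OF assms(1), of h k] orth_h by simp
    also have "\<dots> \<le> (\<Sum>i\<in>I. norm (square_iter k (h i)))"
      by (rule norm_sum)
    also have "\<dots> \<le> (\<Sum>i\<in>I. (M ^ 2) ^ (2 ^ k))"
      using square_iter_selfadjoint[OF sa_h] norm_h by (intro sum_mono power_mono) auto
    finally show ?thesis
      by simp
  qed
  moreover have "M ^ 2 < norm y ^ 2"
    using \<open>\<not> norm (sum x I) \<le> M\<close> \<open>0 \<le> M\<close> unfolding y_def by (simp add: power_strict_mono)
  ultimately show False
    using pow_pow2_not_dominated[of "M ^ 2" "norm y ^ 2" "real (card I)"] by simp
qed

section \<open>Extension from a dense *-subalgebra\<close>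

definition star_subalgebra :: "'a::cstar_algebra set \<Rightarrow> bool" where
  "star_subalgebra S \<longleftrightarrow>
     (\<forall>x\<in>S. \<forall>y\<in>S. x + y \<in> S \<and> x * y \<in> S) \<and>
     (\<forall>c. \<forall>x\<in>S. scaleC c x \<in> S) \<and> (\<forall>x\<in>S. invol x \<in> S)"

lemma continuous_on_closure_limit:
  fixes g :: "'a::metric_space \<Rightarrow> 'b::topological_space"
  assumes "continuous_on (closure S) g" and "\<And>n. x n \<in> S" and "x \<longlonglongrightarrow> a"
  shows "(\<lambda>n. g (x n)) \<longlonglongrightarrow> g a"
proof (rule continuous_on_tendsto_compose[OF assms(1) assms(3)])
  show "a \<in> closure S"
    unfolding closure_sequential using assms(2,3) by blast
  show "\<forall>\<^sub>F n in sequentially. x n \<in> closure S"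
    using assms(2) closure_subset by (intro always_eventually) blast
qed

lemma continuous_on_closure_eq:
  fixes g h :: "'a::metric_space \<Rightarrow> 'b::metric_space"
  assumes "continuous_on (closure S) g" and "continuous_on (closure S) h"
    and "\<And>x. x \<in> S \<Longrightarrow> g x = h x" and "a \<in> closure S"
  shows "g a = h a"
proof -
  obtain x where x: "\<And>n. x n \<in> S" "x \<longlonglongrightarrow> a"
    using assms(4) unfolding closure_sequential by blast
  have "(\<lambda>n. g (x n)) \<longlonglongrightarrow> h a"
    using continuous_on_closure_limit[OF assms(2) x] x(1) assms(3) by simp
  then show ?thesis
    using continuous_on_closure_limit[OF assms(1) x] LIMSEQ_unique by blast
qed

lemma closure_preserves_binop_identity:
  fixes g :: "'a::metric_space \<Rightarrow> 'b::metric_space"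
  assumes g: "continuous_on (closure S) g"
    and S: "\<And>x y. x \<in> S \<Longrightarrow> y \<in> S \<Longrightarrow> op x y \<in> S"
    and hom: "\<And>x y. x \<in> S \<Longrightarrow> y \<in> S \<Longrightarrow> g (op x y) = op' (g x) (g y)"
    and op: "\<And>x y a b. x \<longlonglongrightarrow> a \<Longrightarrow> y \<longlonglongrightarrow> b \<Longrightarrow> (\<lambda>n. op (x n) (y n)) \<longlonglongrightarrow> op a b"
    and op': "\<And>x y a b. x \<longlonglongrightarrow> a \<Longrightarrow> y \<longlonglongrightarrow> b \<Longrightarrow> (\<lambda>n. op' (x n) (y n)) \<longlonglongrightarrow> op' a b"
    and "a \<in> closure S" "b \<in> closure S"
  shows "g (op a b) = op' (g a) (g b)"
proof -
  obtain x y where x: "\<And>n. x n \<in> S" "x \<longlonglongrightarrow> a" and y: "\<And>n. y n \<in> S" "y \<longlonglongrightarrow> b"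
    using \<open>a \<in> closure S\<close> \<open>b \<in> closure S\<close> unfolding closure_sequential by metis
  have "(\<lambda>n. g (op (x n) (y n))) \<longlonglongrightarrow> g (op a b)"
    using S x y by (intro continuous_on_closure_limit[OF g] op) auto
  moreover have "(\<lambda>n. g (op (x n) (y n))) \<longlonglongrightarrow> op' (g a) (g b)"
    using hom x y op'[OF continuous_on_closure_limit[OF g x] continuous_on_closure_limit[OF g y]]
    by simp
  ultimately show ?thesis
    by (rule LIMSEQ_unique)
qed

lemma star_hom_on_closure:
  fixes f g :: "'a::cstar_algebra \<Rightarrow> 'b::cstar_algebra"
  assumes S: "star_subalgebra S" and f: "star_hom_on S f"
    and g: "continuous_on (closure S) g" "\<And>x. x \<in> S \<Longrightarrow> g x = f x"
  shows "star_hom_on (closure S) g"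
proof -
  note identity = closure_preserves_binop_identity[OF g(1)]
  have closed: "x + y \<in> S" "x * y \<in> S" "scaleC c x \<in> S" "invol x \<in> S" if "x \<in> S" "y \<in> S" for x y c
    using S that by (simp_all add: star_subalgebra_def)
  have hom: "g (x + y) = g x + g y" "g (x * y) = g x * g y" "g (scaleC c x) = scaleC c (g x)"
    "g (invol x) = invol (g x)" if "x \<in> S" "y \<in> S" for x y c
    using f g(2) closed that by (simp_all add: star_hom_on_def)
  note scaleC_lim = bounded_linear.tendsto[OF bounded_linear_scaleC]
  note invol_lim = bounded_linear.tendsto[OF bounded_linear_invol]
  show ?thesis
    unfolding star_hom_on_def
  proof (intro conjI ballI allI)
    fix a b c assume ab: "a \<in> closure S" "b \<in> closure S"
    show "g (a + b) = g a + g b"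
      using identity[of "(+)" "(+)", OF closed(1) hom(1) tendsto_add tendsto_add ab] .
    show "g (a * b) = g a * g b"
      using identity[of "(*)" "(*)", OF closed(2) hom(2) tendsto_mult tendsto_mult ab] .
    show "g (scaleC c a) = scaleC c (g a)"
      using identity[of "\<lambda>x _. scaleC c x" "\<lambda>x _. scaleC c x", OF closed(3) hom(3)
          scaleC_lim scaleC_lim ab] .
    show "g (invol a) = invol (g a)"
      using identity[of "\<lambda>x _. invol x" "\<lambda>x _. invol x", OF closed(4) hom(4)
          invol_lim invol_lim ab] .
  qed
qed

section \<open>Cuntz--Krieger families of k-graphs\<close>

locale kgraph_CK_family =
  fixes L :: "'m set" and rng src :: "'m \<Rightarrow> 'm" and cmp :: "'m \<Rightarrow> 'm \<Rightarrow> 'm"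
    and d :: "'m \<Rightarrow> ('k::finite \<Rightarrow> nat)" and s :: "'m \<Rightarrow> 'a::cstar_algebra"
  assumes kgraph: "is_kgraph L rng src cmp d"
    and locally_finite: "locally_finite_no_sources_sinks L rng src d"
    and CK: "CK_family L rng src cmp d s"
begin

lemma rng_in_L: "l \<in> L \<Longrightarrow> rng l \<in> L"
  and src_in_L: "l \<in> L \<Longrightarrow> src l \<in> L"
  and src_rng: "l \<in> L \<Longrightarrow> src (rng l) = rng l"
  and rng_src: "l \<in> L \<Longrightarrow> rng (src l) = src l"
  and cmp_rng_left: "l \<in> L \<Longrightarrow> cmp (rng l) l = l"
  and cmp_src_right: "l \<in> L \<Longrightarrow> cmp l (src l) = l"
  and d_rng: "l \<in> L \<Longrightarrow> d (rng l) = (\<lambda>_. 0)"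
  and d_src: "l \<in> L \<Longrightarrow> d (src l) = (\<lambda>_. 0)"
  using kgraph unfolding is_kgraph_def by auto

lemma cmp_in_L: "mu \<in> L \<Longrightarrow> nu \<in> L \<Longrightarrow> src mu = rng nu \<Longrightarrow> cmp mu nu \<in> L"
  and src_cmp: "mu \<in> L \<Longrightarrow> nu \<in> L \<Longrightarrow> src mu = rng nu \<Longrightarrow> src (cmp mu nu) = src nu"
  and d_cmp: "mu \<in> L \<Longrightarrow> nu \<in> L \<Longrightarrow> src mu = rng nu \<Longrightarrow> d (cmp mu nu) = (\<lambda>i. d mu i + d nu i)"
  using kgraph unfolding is_kgraph_def by auto

lemma factorisation:
  "l \<in> L \<Longrightarrow> d l = (\<lambda>i. m i + n i) \<Longrightarrow>
   \<exists>!(mu, nu). mu \<in> L \<and> nu \<in> L \<and> src mu = rng nu \<and> cmp mu nu = l \<and> d mu = m \<and> d nu = n"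
  using kgraph unfolding is_kgraph_def by blast

lemma factorisation_unique:
  assumes "a \<in> L" "b \<in> L" "a' \<in> L" "b' \<in> L" "src a = rng b" "src a' = rng b'"
    and "cmp a b = cmp a' b'" "d a = d a'" "d b = d b'"
  shows "a = a' \<and> b = b'"
  using factorisation[OF cmp_in_L d_cmp, of a b] assms by (auto simp: Ex1_def)

text \<open>Both (rng l, l) and (l, src l) factor l into two paths of degree 0.\<close>
lemma degree_zero_rng:
  assumes "l \<in> L" "d l = (\<lambda>_. 0)"
  shows "rng l = l"
proof -
  have "rng l = l \<and> l = src l"
    by (rule factorisation_unique)
      (use assms rng_in_L src_in_L src_rng rng_src cmp_rng_left cmp_src_right d_rng d_src in auto)
  then show ?thesis
    by simp
qed

lemma vertices_iff: "v \<in> vertices L d \<longleftrightarrow> v \<in> L \<and> d v = (\<lambda>_. 0)"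
  by (simp add: vertices_def)

lemma rng_vertex: "l \<in> L \<Longrightarrow> rng l \<in> vertices L d"
  and src_vertex: "l \<in> L \<Longrightarrow> src l \<in> vertices L d"
  by (auto simp: vertices_iff rng_in_L src_in_L d_rng d_src)

lemma vertex_src: "v \<in> vertices L d \<Longrightarrow> src v = v"
  by (metis degree_zero_rng src_rng vertices_iff)

lemma finite_src_fibre: "v \<in> vertices L d \<Longrightarrow> finite {l \<in> L. d l = p \<and> src l = v}"
  and src_fibre_nonempty: "v \<in> vertices L d \<Longrightarrow> \<exists>l\<in>L. d l = p \<and> src l = v"
  using locally_finite unfolding locally_finite_no_sources_sinks_def by auto

lemma vertex_projection: "v \<in> vertices L d \<Longrightarrow> invol (s v) = s v"
  and vertex_idempotent: "v \<in> vertices L d \<Longrightarrow> s v * s v = s v"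
  and vertices_orthogonal: "v \<in> vertices L d \<Longrightarrow> w \<in> vertices L d \<Longrightarrow> v \<noteq> w \<Longrightarrow> s v * s w = 0"
  and s_mult_cmp: "mu \<in> L \<Longrightarrow> nu \<in> L \<Longrightarrow> src mu = rng nu \<Longrightarrow> s mu * s nu = s (cmp mu nu)"
  and s_adjoint_mult: "mu \<in> L \<Longrightarrow> nu \<in> L \<Longrightarrow>
        invol (s mu) * s nu = (\<Sum>(xi, eta)\<in>min_ext L rng src cmp d mu nu. s xi * invol (s eta))"
  using CK unfolding CK_family_def by auto

lemma min_ext_same_degree:
  assumes "mu \<in> L" "nu \<in> L" "d mu = d nu" "(xi, eta) \<in> min_ext L rng src cmp d mu nu"
  shows "xi = src mu \<and> eta = src nu \<and> mu = nu"
proof -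
  have m: "xi \<in> L" "eta \<in> L" "src mu = rng xi" "src nu = rng eta" "cmp mu xi = cmp nu eta"
    and deg: "d (cmp mu xi) = d mu"
    using assms(3,4) unfolding min_ext_def by auto
  have "(\<lambda>i. d mu i + d xi i) = d mu"
    using deg d_cmp[of mu xi] m assms by simp
  then have "d xi = (\<lambda>_. 0)"
    by (simp add: fun_eq_iff)
  then have xi: "xi = src mu"
    using degree_zero_rng m by metis
  have "(\<lambda>i. d nu i + d eta i) = d nu"
    using deg m(5) d_cmp[of nu eta] m assms by simp
  then have "d eta = (\<lambda>_. 0)"
    by (simp add: fun_eq_iff)
  then have eta: "eta = src nu"
    using degree_zero_rng m by metis
  have "mu = cmp nu eta"
    using m(5) xi cmp_src_right assms(1) by simp
  then show ?thesis
    using xi eta cmp_src_right assms(2) by simp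
qed

lemma s_adjoint_mult_self:
  assumes "l \<in> L"
  shows "invol (s l) * s l = s (src l)"
proof -
  have "min_ext L rng src cmp d l l \<subseteq> {(src l, src l)}"
    using min_ext_same_degree assms by fast
  moreover have "(src l, src l) \<in> min_ext L rng src cmp d l l"
    using assms src_in_L rng_src cmp_src_right by (simp add: min_ext_def)
  ultimately have "min_ext L rng src cmp d l l = {(src l, src l)}"
    by blast
  then show ?thesis
    using s_adjoint_mult[OF assms assms] vertex_projection vertex_idempotent src_vertex assms
    by simp
qed

lemma s_adjoint_mult_orthogonal:
  assumes "mu \<in> L" "nu \<in> L" "d mu = d nu" "mu \<noteq> nu"
  shows "invol (s mu) * s nu = 0"
proof -
  have "min_ext L rng src cmp d mu nu = {}"
    using min_ext_same_degree assms by fast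
  then show ?thesis
    using s_adjoint_mult assms by simp
qed

lemma s_mult_src: "l \<in> L \<Longrightarrow> s l * s (src l) = s l"
  using s_mult_cmp[of l "src l"] src_in_L rng_src cmp_src_right by simp

lemma rng_mult_s: "l \<in> L \<Longrightarrow> s (rng l) * s l = s l"
  using s_mult_cmp[of "rng l" l] rng_in_L src_rng cmp_rng_left by simp

lemma s_mult_not_composable:
  assumes "mu \<in> L" "nu \<in> L" "src mu \<noteq> rng nu"
  shows "s mu * s nu = 0"
proof -
  have "s mu * s nu = (s mu * s (src mu)) * (s (rng nu) * s nu)"
    using s_mult_src rng_mult_s assms by simp
  also have "\<dots> = s mu * (s (src mu) * s (rng nu)) * s nu"
    by (simp add: mult.assoc)
  finally have "s mu * s nu = s mu * (s (src mu) * s (rng nu)) * s nu" .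
  then show ?thesis
    using vertices_orthogonal src_vertex rng_vertex assms by simp
qed

lemma norm_s_le_one: "l \<in> L \<Longrightarrow> norm (s l) \<le> 1"
  using norm_partial_isometry_le_one[OF vertex_projection vertex_idempotent s_adjoint_mult_self]
    src_vertex by blast

section \<open>The diagonal\<close>

abbreviation D :: "'a set" where "D \<equiv> diag_span L s"

abbreviation rproj :: "'m \<Rightarrow> 'a" where "rproj l \<equiv> s l * invol (s l)"

lemma diag_spanE:
  assumes "a \<in> D"
  obtains F c where "finite F" "F \<subseteq> L" "a = (\<Sum>l\<in>F. scaleC (c l) (rproj l))"
  using assms unfolding diag_span_def by blast

lemma diag_spanI: "finite F \<Longrightarrow> F \<subseteq> L \<Longrightarrow> (\<Sum>l\<in>F. scaleC (c l) (rproj l)) \<in> D"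
  unfolding diag_span_def mem_Collect_eq by (intro exI[of _ F] exI[of _ c]) simp

lemma zero_in_diag_span: "0 \<in> D"
  using diag_spanI[of "{}"] by simp

lemma rproj_in_diag_span: "l \<in> L \<Longrightarrow> rproj l \<in> D"
  using diag_spanI[of "{l}" "\<lambda>_. 1"] by (simp add: scaleC_one)

lemma diag_span_add:
  assumes "a \<in> D" "b \<in> D"
  shows "a + b \<in> D"
proof -
  obtain F c where F: "finite F" "F \<subseteq> L" "a = (\<Sum>l\<in>F. scaleC (c l) (rproj l))"
    using assms(1) by (rule diag_spanE)
  obtain G e where G: "finite G" "G \<subseteq> L" "b = (\<Sum>l\<in>G. scaleC (e l) (rproj l))"
    using assms(2) by (rule diag_spanE)
  have "a = (\<Sum>l\<in>F \<union> G. scaleC (if l \<in> F then c l else 0) (rproj l))"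
    unfolding F(3) using F G by (intro sum.mono_neutral_cong_left) auto
  moreover have "b = (\<Sum>l\<in>F \<union> G. scaleC (if l \<in> G then e l else 0) (rproj l))"
    unfolding G(3) using F G by (intro sum.mono_neutral_cong_left) auto
  ultimately have "a + b = (\<Sum>l\<in>F \<union> G.
      scaleC ((if l \<in> F then c l else 0) + (if l \<in> G then e l else 0)) (rproj l))"
    by (simp add: scaleC_add_left sum.distrib)
  then show ?thesis
    using F G diag_spanI[of "F \<union> G"] by simp
qed

lemma diag_span_scaleC:
  assumes "a \<in> D"
  shows "scaleC z a \<in> D"
proof -
  obtain F c where F: "finite F" "F \<subseteq> L" "a = (\<Sum>l\<in>F. scaleC (c l) (rproj l))"
    using assms by (rule diag_spanE)
  have "scaleC z a = (\<Sum>l\<in>F. scaleC (z * c l) (rproj l))"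
    unfolding F(3) scaleC_sum scaleC_scaleC ..
  then show ?thesis
    using F(1,2) diag_spanI by simp
qed

lemma diag_span_sum: "finite A \<Longrightarrow> (\<And>i. i \<in> A \<Longrightarrow> f i \<in> D) \<Longrightarrow> sum f A \<in> D"
  by (induction A rule: finite_induct) (auto intro: zero_in_diag_span diag_span_add)

lemma diag_span_diff: "a \<in> D \<Longrightarrow> b \<in> D \<Longrightarrow> a - b \<in> D"
  using diag_span_add[of a "scaleC (-1) b"] diag_span_scaleC[of b "-1"]
  by (simp add: scaleC_minus_one)

lemma s_conj_rproj:
  assumes "e \<in> L" "l \<in> L"
  shows "s e * rproj l * invol (s e) = (if src e = rng l then rproj (cmp e l) else 0)"
proof -
  have "s e * rproj l * invol (s e) = (s e * s l) * invol (s e * s l)"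
    by (simp add: invol_mult mult.assoc)
  then show ?thesis
    using s_mult_cmp s_mult_not_composable assms by simp
qed

lemma rproj_mult_in_diag_span:
  assumes "l \<in> L" "m \<in> L"
  shows "rproj l * rproj m \<in> D"
proof -
  let ?M = "min_ext L rng src cmp d l m"
  have "rproj l * rproj m = s l * (invol (s l) * s m) * invol (s m)"
    by (simp add: mult.assoc)
  also have "\<dots> = (\<Sum>(xi, eta)\<in>?M. (s l * s xi) * invol (s m * s eta))"
    unfolding s_adjoint_mult[OF assms]
    by (simp add: sum_distrib_left sum_distrib_right case_prod_beta invol_mult mult.assoc)
  also have "\<dots> = (\<Sum>(xi, eta)\<in>?M. rproj (cmp l xi))"
    using assms s_mult_cmp by (intro sum.cong) (auto simp: min_ext_def)
  also have "\<dots> \<in> D"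
    using assms cmp_in_L rproj_in_diag_span zero_in_diag_span
    by (cases "finite ?M") (auto intro!: diag_span_sum simp: min_ext_def)
  finally show ?thesis .
qed

lemma diag_span_mult:
  assumes "a \<in> D" "b \<in> D"
  shows "a * b \<in> D"
proof -
  obtain F c where F: "finite F" "F \<subseteq> L" "a = (\<Sum>l\<in>F. scaleC (c l) (rproj l))"
    using assms(1) by (rule diag_spanE)
  obtain G e where G: "finite G" "G \<subseteq> L" "b = (\<Sum>l\<in>G. scaleC (e l) (rproj l))"
    using assms(2) by (rule diag_spanE)
  have "a * b = (\<Sum>l\<in>F. \<Sum>m\<in>G. scaleC (e m) (scaleC (c l) (rproj l * rproj m)))"
    unfolding F(3) G(3) sum_product by (simp add: scaleC_mult_left scaleC_mult_right)
  then show ?thesis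
    using F G rproj_mult_in_diag_span by (auto intro!: diag_span_sum diag_span_scaleC)
qed

lemma diag_span_invol:
  assumes "a \<in> D"
  shows "invol a \<in> D"
proof -
  obtain F c where F: "finite F" "F \<subseteq> L" "a = (\<Sum>l\<in>F. scaleC (c l) (rproj l))"
    using assms by (rule diag_spanE)
  have "invol a = (\<Sum>l\<in>F. scaleC (cnj (c l)) (rproj l))"
    unfolding F(3) by (simp add: invol_sum invol_scaleC invol_mult invol_invol)
  then show ?thesis
    using F(1,2) diag_spanI by simp
qed

lemma star_subalgebra_diag_span: "star_subalgebra D"
  unfolding star_subalgebra_def
  by (simp add: diag_span_add diag_span_mult diag_span_scaleC diag_span_invol)

definition supported_over :: "'a \<Rightarrow> 'm set \<Rightarrow> bool" where
  "supported_over a V \<longleftrightarrow> (\<forall>e\<in>L. src e \<notin> V \<longrightarrow> s e * a = 0 \<and> a * invol (s e) = 0)"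

lemma supported_over_mono: "supported_over a V \<Longrightarrow> V \<subseteq> W \<Longrightarrow> supported_over a W"
  unfolding supported_over_def by blast

lemma supported_over_add: "supported_over a V \<Longrightarrow> supported_over b V \<Longrightarrow> supported_over (a + b) V"
  unfolding supported_over_def by (simp add: distrib_left distrib_right)

lemma supported_over_scaleC: "supported_over a V \<Longrightarrow> supported_over (scaleC z a) V"
  unfolding supported_over_def by (simp add: scaleC_mult_left scaleC_mult_right)

lemma supported_over_sum:
  "finite A \<Longrightarrow> (\<And>i. i \<in> A \<Longrightarrow> supported_over (f i) V) \<Longrightarrow> supported_over (sum f A) V"
  by (induction A rule: finite_induct) (auto simp: supported_over_def distrib_left distrib_right)

lemma supported_over_invol:
  assumes "supported_over a V"
  shows "supported_over (invol a) V"
  unfolding supported_over_def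
proof (intro ballI impI)
  fix e assume "e \<in> L" "src e \<notin> V"
  then have "s e * a = 0" "a * invol (s e) = 0"
    using assms unfolding supported_over_def by auto
  moreover have "s e * invol a = invol (a * invol (s e))" "invol a * invol (s e) = invol (s e * a)"
    by (simp_all add: invol_mult invol_invol)
  ultimately show "s e * invol a = 0 \<and> invol a * invol (s e) = 0"
    by simp
qed

lemma supported_over_mult: "supported_over a V \<Longrightarrow> supported_over b V \<Longrightarrow> supported_over (a * b) V"
  unfolding supported_over_def by (simp add: mult.assoc[symmetric]) (simp add: mult.assoc)

lemma rproj_supported_over:
  assumes "l \<in> L"
  shows "supported_over (rproj l) {rng l}"
  unfolding supported_over_def
proof (intro ballI impI)
  fix e assume "e \<in> L" "src e \<notin> {rng l}"
  then have "s e * s l = 0"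
    using s_mult_not_composable assms by auto
  moreover have "rproj l * invol (s e) = s l * invol (s e * s l)"
    by (simp add: invol_mult mult.assoc)
  ultimately show "s e * rproj l = 0 \<and> rproj l * invol (s e) = 0"
    by (simp flip: mult.assoc)
qed

lemma rproj_commute_vertex:
  assumes "l \<in> L" "v \<in> vertices L d"
  shows "rproj l * s v = s v * rproj l"
proof -
  have "rproj l * s v = s l * invol (s v * s l)"
    using vertex_projection assms by (simp add: invol_mult mult.assoc)
  moreover have "s v * rproj l = (s v * s l) * invol (s l)"
    by (simp add: mult.assoc)
  moreover have "s v * s l = (if v = rng l then s l else 0)"
    using rng_mult_s s_mult_not_composable vertex_src vertices_iff assms by auto
  ultimately show ?thesis
    by simp
qed

lemma sum_vertex_conj_rproj:
  assumes "l \<in> L" "finite V" "V \<subseteq> vertices L d" "rng l \<in> V"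
  shows "(\<Sum>v\<in>V. s v * rproj l * s v) = rproj l"
proof -
  have "s v * rproj l * s v = (if v = rng l then rproj l else 0)" if "v \<in> V" for v
  proof -
    have v: "v \<in> vertices L d" "v \<in> L"
      using that assms by (auto simp: vertices_iff)
    have "s v * rproj l * s v = s v * rproj l * invol (s v)"
      using vertex_projection v by simp
    then show ?thesis
      using s_conj_rproj[OF v(2) assms(1)] vertex_src[OF v(1)] cmp_rng_left[OF assms(1)] by auto
  qed
  then show ?thesis
    using assms by simp
qed

lemma diag_span_supported_over:
  assumes "a \<in> D"
  obtains V where "finite V" "V \<subseteq> vertices L d" "supported_over a V"
    "a = (\<Sum>v\<in>V. s v * a * s v)"
proof -
  obtain F c where F: "finite F" "F \<subseteq> L" "a = (\<Sum>l\<in>F. scaleC (c l) (rproj l))"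
    using assms by (rule diag_spanE)
  let ?V = "rng ` F"
  have V: "finite ?V" "?V \<subseteq> vertices L d"
    using F rng_vertex by auto
  have "supported_over (scaleC (c l) (rproj l)) ?V" if "l \<in> F" for l
    using rproj_supported_over[of l] that F
    by (auto intro: supported_over_scaleC supported_over_mono)
  then have supp: "supported_over a ?V"
    unfolding F(3) by (rule supported_over_sum[OF F(1)])
  have "(\<Sum>v\<in>?V. s v * a * s v) = (\<Sum>v\<in>?V. \<Sum>l\<in>F. scaleC (c l) (s v * rproj l * s v))"
    unfolding F(3)
    by (simp add: sum_distrib_left sum_distrib_right scaleC_mult_left scaleC_mult_right)
  also have "\<dots> = (\<Sum>l\<in>F. scaleC (c l) (\<Sum>v\<in>?V. s v * rproj l * s v))"
    by (subst sum.swap) (simp add: scaleC_sum)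
  also have "\<dots> = a"
    unfolding F(3) using sum_vertex_conj_rproj V F by (intro sum.cong) auto
  finally show ?thesis
    using that V supp by simp
qed

lemma diag_span_commute_vertex:
  assumes "a \<in> D" "v \<in> vertices L d"
  shows "a * s v = s v * a"
proof -
  obtain F c where F: "finite F" "F \<subseteq> L" "a = (\<Sum>l\<in>F. scaleC (c l) (rproj l))"
    using assms(1) by (rule diag_spanE)
  show ?thesis
    unfolding F(3) using rproj_commute_vertex F assms
    by (simp add: sum_distrib_left sum_distrib_right scaleC_mult_left scaleC_mult_right subset_iff)
qed

lemma diag_span_common_support:
  assumes "a \<in> D" "b \<in> D"
  obtains V where "finite V" "V \<subseteq> vertices L d" "supported_over a V" "supported_over b V"
proof -
  obtain Va where "finite Va" "Va \<subseteq> vertices L d" "supported_over a Va"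
    using diag_span_supported_over[OF assms(1)] by metis
  moreover obtain Vb where "finite Vb" "Vb \<subseteq> vertices L d" "supported_over b Vb"
    using diag_span_supported_over[OF assms(2)] by metis
  ultimately show ?thesis
    using that[of "Va \<union> Vb"] supported_over_mono by blast
qed

section \<open>The endomorphisms Phi p\<close>

abbreviation \<Phi> :: "('k \<Rightarrow> nat) \<Rightarrow> 'a \<Rightarrow> 'a" where "\<Phi> p \<equiv> Phi L d s p"

definition deg_paths :: "('k \<Rightarrow> nat) \<Rightarrow> 'm set \<Rightarrow> 'm set" where
  "deg_paths p V = {e \<in> L. d e = p \<and> src e \<in> V}"

lemma finite_deg_paths:
  assumes "finite V" "V \<subseteq> vertices L d"
  shows "finite (deg_paths p V)"
proof -
  have "deg_paths p V = (\<Union>v\<in>V. {l \<in> L. d l = p \<and> src l = v})"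
    unfolding deg_paths_def by blast
  then show ?thesis
    using assms finite_src_fibre by auto
qed

lemma Phi_support_subset:
  assumes "supported_over a V"
  shows "{e \<in> L. d e = p \<and> s e * a * invol (s e) \<noteq> 0} \<subseteq> deg_paths p V"
  using assms unfolding supported_over_def deg_paths_def by auto

lemma Phi_eq_sum_deg_paths:
  assumes "finite V" "V \<subseteq> vertices L d" "supported_over a V"
  shows "\<Phi> p a = (\<Sum>e\<in>deg_paths p V. s e * a * invol (s e))"
  unfolding Phi_def using finite_deg_paths[OF assms(1,2)] Phi_support_subset[OF assms(3)]
  by (intro sum.mono_neutral_left) (auto simp: deg_paths_def)

lemma finite_Phi_support:
  assumes "a \<in> D"
  shows "finite {e \<in> L. d e = p \<and> s e * a * invol (s e) \<noteq> 0}"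
proof -
  obtain V where "finite V" "V \<subseteq> vertices L d" "supported_over a V"
    using diag_span_supported_over[OF assms] by metis
  then show ?thesis
    using finite_subset[OF Phi_support_subset finite_deg_paths] by blast
qed

lemma Phi_in_diag_span:
  assumes "a \<in> D"
  shows "\<Phi> p a \<in> D"
proof -
  obtain V where V: "finite V" "V \<subseteq> vertices L d" "supported_over a V"
    using diag_span_supported_over[OF assms] by metis
  obtain F c where F: "finite F" "F \<subseteq> L" "a = (\<Sum>l\<in>F. scaleC (c l) (rproj l))"
    using assms by (rule diag_spanE)
  have "\<Phi> p a = (\<Sum>e\<in>deg_paths p V. s e * a * invol (s e))"
    by (rule Phi_eq_sum_deg_paths[OF V])
  also have "\<dots> = (\<Sum>e\<in>deg_paths p V. \<Sum>l\<in>F. scaleC (c l) (s e * rproj l * invol (s e)))"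
    unfolding F(3)
    by (simp add: sum_distrib_left sum_distrib_right scaleC_mult_left scaleC_mult_right)
  also have "\<dots> \<in> D"
  proof (intro diag_span_sum diag_span_scaleC)
    fix e l assume "e \<in> deg_paths p V" "l \<in> F"
    then have el: "e \<in> L" "l \<in> L"
      using F(2) by (auto simp: deg_paths_def)
    show "s e * rproj l * invol (s e) \<in> D"
      unfolding s_conj_rproj[OF el] using cmp_in_L el rproj_in_diag_span zero_in_diag_span by simp
  qed (use finite_deg_paths[OF V(1,2)] F(1) in auto)
  finally show ?thesis .
qed

lemma Phi_add:
  assumes "a \<in> D" "b \<in> D"
  shows "\<Phi> p (a + b) = \<Phi> p a + \<Phi> p b"
proof -
  obtain V where V: "finite V" "V \<subseteq> vertices L d" "supported_over a V" "supported_over b V"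
    using diag_span_common_support[OF assms] by metis
  show ?thesis
    unfolding Phi_eq_sum_deg_paths[OF V(1,2,3)] Phi_eq_sum_deg_paths[OF V(1,2,4)]
      Phi_eq_sum_deg_paths[OF V(1,2) supported_over_add[OF V(3,4)]]
    by (simp add: distrib_left distrib_right sum.distrib)
qed

lemma Phi_scaleC:
  assumes "a \<in> D"
  shows "\<Phi> p (scaleC z a) = scaleC z (\<Phi> p a)"
proof -
  obtain V where V: "finite V" "V \<subseteq> vertices L d" "supported_over a V"
    using diag_span_supported_over[OF assms] by metis
  show ?thesis
    unfolding Phi_eq_sum_deg_paths[OF V] Phi_eq_sum_deg_paths[OF V(1,2) supported_over_scaleC[OF V(3)]]
    by (simp add: scaleC_sum scaleC_mult_left scaleC_mult_right)
qed

lemma Phi_invol: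
  assumes "a \<in> D"
  shows "\<Phi> p (invol a) = invol (\<Phi> p a)"
proof -
  obtain V where V: "finite V" "V \<subseteq> vertices L d" "supported_over a V"
    using diag_span_supported_over[OF assms] by metis
  show ?thesis
    unfolding Phi_eq_sum_deg_paths[OF V] Phi_eq_sum_deg_paths[OF V(1,2) supported_over_invol[OF V(3)]]
    by (simp add: invol_sum invol_mult invol_invol mult.assoc)
qed

lemma Phi_diff:
  assumes "a \<in> D" "b \<in> D"
  shows "\<Phi> p (a - b) = \<Phi> p a - \<Phi> p b"
  using Phi_add[OF assms(1) diag_span_scaleC[OF assms(2)], of p "-1"]
    Phi_scaleC[OF assms(2), of p "-1"]
  by (simp add: scaleC_minus_one)

text \<open>Cross terms vanish because paths of equal degree have orthogonal ranges; the diagonal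
  terms collapse because a commutes with s (src e) = s e* s e.\<close>
lemma conj_mult_conj:
  assumes "a \<in> D" "e \<in> L" "f \<in> L" "d e = d f"
  shows "(s e * a * invol (s e)) * (s f * b * invol (s f))
    = (if e = f then s e * (a * b) * invol (s e) else 0)"
proof (cases "e = f")
  case True
  have "(s e * a * invol (s e)) * (s e * b * invol (s e))
      = s e * (a * (invol (s e) * s e)) * b * invol (s e)"
    by (simp add: mult.assoc)
  also have "\<dots> = s e * (a * s (src e)) * b * invol (s e)"
    using s_adjoint_mult_self assms by simp
  also have "\<dots> = (s e * s (src e)) * a * b * invol (s e)"
    using diag_span_commute_vertex[OF assms(1) src_vertex[OF assms(2)]] by (simp add: mult.assoc)
  also have "\<dots> = s e * (a * b) * invol (s e)"
    using s_mult_src assms by (simp add: mult.assoc)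
  finally show ?thesis
    using True by simp
next
  case False
  have "(s e * a * invol (s e)) * (s f * b * invol (s f))
      = s e * a * (invol (s e) * s f) * b * invol (s f)"
    by (simp add: mult.assoc)
  then show ?thesis
    using s_adjoint_mult_orthogonal assms False by simp
qed

lemma Phi_mult:
  assumes "a \<in> D" "b \<in> D"
  shows "\<Phi> p (a * b) = \<Phi> p a * \<Phi> p b"
proof -
  obtain V where V: "finite V" "V \<subseteq> vertices L d" "supported_over a V" "supported_over b V"
    using diag_span_common_support[OF assms] by metis
  let ?S = "deg_paths p V"
  have "\<Phi> p a * \<Phi> p b
      = (\<Sum>e\<in>?S. \<Sum>f\<in>?S. (s e * a * invol (s e)) * (s f * b * invol (s f)))"
    unfolding Phi_eq_sum_deg_paths[OF V(1,2,3)] Phi_eq_sum_deg_paths[OF V(1,2,4)] sum_product ..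
  also have "\<dots> = (\<Sum>e\<in>?S. \<Sum>f\<in>?S. if e = f then s e * (a * b) * invol (s e) else 0)"
    using conj_mult_conj[OF assms(1)] by (intro sum.cong refl) (auto simp: deg_paths_def)
  also have "\<dots> = \<Phi> p (a * b)"
    unfolding Phi_eq_sum_deg_paths[OF V(1,2) supported_over_mult[OF V(3,4)]]
    using finite_deg_paths[OF V(1,2)] by simp
  finally show ?thesis
    by simp
qed

lemma star_hom_on_Phi: "star_hom_on D (\<Phi> p)"
  unfolding star_hom_on_def by (simp add: Phi_add Phi_scaleC Phi_mult Phi_invol)

lemma norm_Phi_le:
  assumes "a \<in> D"
  shows "norm (\<Phi> p a) \<le> norm a"
proof -
  obtain V where V: "finite V" "V \<subseteq> vertices L d" "supported_over a V"
    using diag_span_supported_over[OF assms] by metis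
  show ?thesis
    unfolding Phi_eq_sum_deg_paths[OF V]
  proof (rule norm_sum_orthogonal_le[OF finite_deg_paths[OF V(1,2)] norm_ge_zero])
    fix e assume "e \<in> deg_paths p V"
    then show "norm (s e * a * invol (s e)) \<le> norm a"
      using norm_conj_le[OF norm_s_le_one] by (simp add: deg_paths_def)
  next
    fix e f assume "e \<in> deg_paths p V" "f \<in> deg_paths p V" "e \<noteq> f"
    then have "invol (s e) * s f = 0" "invol (s f) * s e = 0"
      using s_adjoint_mult_orthogonal by (auto simp: deg_paths_def)
    moreover have "invol (s e * a * invol (s e)) * (s f * a * invol (s f))
        = (s e * invol a) * (invol (s e) * s f) * (a * invol (s f))"
      "(s e * a * invol (s e)) * invol (s f * a * invol (s f))
        = (s e * a) * (invol (s e) * s f) * (invol a * invol (s f))"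
      by (simp_all add: invol_mult invol_invol mult.assoc)
    ultimately show "invol (s e * a * invol (s e)) * (s f * a * invol (s f)) = 0
        \<and> (s e * a * invol (s e)) * invol (s f * a * invol (s f)) = 0"
      by simp
  qed
qed

lemma adjoint_conj_Phi:
  assumes "finite V" "V \<subseteq> vertices L d" "supported_over a V" "e \<in> deg_paths p V"
  shows "invol (s e) * \<Phi> p a * s e = s (src e) * a * s (src e)"
proof -
  have e: "e \<in> L" "d e = p"
    using assms(4) by (auto simp: deg_paths_def)
  have "invol (s e) * (s f * a * invol (s f)) * s e
      = (if f = e then s (src e) * a * s (src e) else 0)" if "f \<in> deg_paths p V" for f
  proof (cases "f = e")
    case True
    have "invol (s e) * (s e * a * invol (s e)) * s e = (invol (s e) * s e) * a * (invol (s e) * s e)"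
      by (simp add: mult.assoc)
    then show ?thesis
      using True s_adjoint_mult_self[OF e(1)] by simp
  next
    case False
    then have "invol (s e) * s f = 0"
      using s_adjoint_mult_orthogonal e that by (auto simp: deg_paths_def)
    then show ?thesis
      using False by (simp flip: mult.assoc)
  qed
  then have "invol (s e) * \<Phi> p a * s e = (\<Sum>f\<in>deg_paths p V. if f = e then s (src e) * a * s (src e) else 0)"
    unfolding Phi_eq_sum_deg_paths[OF assms(1-3)] by (simp add: sum_distrib_left sum_distrib_right)
  then show ?thesis
    using finite_deg_paths[OF assms(1,2)] assms(4) by simp
qed

text \<open>Since there are no sources, every vertex v is the source of some path e of degree p, and
  s v a s v = s e* Phi p a s e.\<close>
lemma norm_le_norm_Phi:
  assumes "a \<in> D"
  shows "norm a \<le> norm (\<Phi> p a)"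
proof -
  obtain V where V: "finite V" "V \<subseteq> vertices L d" "supported_over a V"
    and a: "a = (\<Sum>v\<in>V. s v * a * s v)"
    using diag_span_supported_over[OF assms] by metis
  have "norm (\<Sum>v\<in>V. s v * a * s v) \<le> norm (\<Phi> p a)"
  proof (rule norm_sum_orthogonal_le[OF V(1) norm_ge_zero])
    fix v assume "v \<in> V"
    then obtain e where e: "e \<in> deg_paths p V" "src e = v"
      using src_fibre_nonempty[of v p] V(2) by (auto simp: deg_paths_def)
    then have "s v * a * s v = invol (s e) * \<Phi> p a * invol (invol (s e))"
      using adjoint_conj_Phi[OF V e(1)] by (simp add: invol_invol)
    also have "norm \<dots> \<le> norm (\<Phi> p a)"
      using e norm_s_le_one by (intro norm_conj_le) (simp add: deg_paths_def)
    finally show "norm (s v * a * s v) \<le> norm (\<Phi> p a)" .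
  next
    fix v w assume "v \<in> V" "w \<in> V" "v \<noteq> w"
    then have vw: "v \<in> vertices L d" "w \<in> vertices L d" "s v * s w = 0"
      using V(2) vertices_orthogonal by auto
    have "invol (s v * a * s v) * (s w * a * s w) = (s v * invol a) * (s v * s w) * (a * s w)"
      "(s v * a * s v) * invol (s w * a * s w) = (s v * a) * (s v * s w) * (invol a * s w)"
      using vertex_projection vw(1,2) by (simp_all add: invol_mult mult.assoc)
    then show "invol (s v * a * s v) * (s w * a * s w) = 0
        \<and> (s v * a * s v) * invol (s w * a * s w) = 0"
      using vw by simp
  qed
  then show ?thesis
    using a by simp
qed

lemma norm_Phi: "a \<in> D \<Longrightarrow> norm (\<Phi> p a) = norm a"
  using norm_Phi_le norm_le_norm_Phi by (simp add: order_antisym)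

lemma lipschitz_Phi: "1-lipschitz_on D (\<Phi> p)"
proof (rule lipschitz_onI)
  fix a b assume "a \<in> D" "b \<in> D"
  then show "dist (\<Phi> p a) (\<Phi> p b) \<le> 1 * dist a b"
    using norm_Phi diag_span_diff by (simp add: dist_norm flip: Phi_diff)
qed simp

lemma Phi_zero_degree:
  assumes "a \<in> D"
  shows "\<Phi> (\<lambda>_. 0) a = a"
proof -
  obtain V where V: "finite V" "V \<subseteq> vertices L d" "supported_over a V"
    and a: "a = (\<Sum>v\<in>V. s v * a * s v)"
    using diag_span_supported_over[OF assms] by metis
  have "deg_paths (\<lambda>_. 0) V = V"
    using V(2) vertex_src by (force simp: deg_paths_def vertices_iff)
  then have "\<Phi> (\<lambda>_. 0) a = (\<Sum>v\<in>V. s v * a * invol (s v))"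
    using Phi_eq_sum_deg_paths[OF V] by simp
  also have "\<dots> = a"
    using V(2) vertex_projection by (subst a) (intro sum.cong; auto)
  finally show ?thesis .
qed

lemma s_conj_s_conj:
  assumes "t \<in> L" "e \<in> L"
  shows "s t * (s e * a * invol (s e)) * invol (s t)
    = (if src t = rng e then s (cmp t e) * a * invol (s (cmp t e)) else 0)"
proof -
  have "s t * (s e * a * invol (s e)) * invol (s t) = (s t * s e) * a * invol (s t * s e)"
    by (simp add: mult.assoc invol_mult)
  then show ?thesis
    using s_mult_cmp[OF assms] s_mult_not_composable[OF assms] by simp
qed

lemma supported_over_Phi:
  assumes "finite V" "V \<subseteq> vertices L d" "supported_over a V"
  shows "supported_over (\<Phi> q a) (rng ` deg_paths q V)"
  unfolding supported_over_def
proof (intro ballI impI)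
  fix t assume t: "t \<in> L" "src t \<notin> rng ` deg_paths q V"
  have zero: "s t * s e = 0" if "e \<in> deg_paths q V" for e
    using s_mult_not_composable[of t e] t that by (auto simp: deg_paths_def)
  have "s t * \<Phi> q a = (\<Sum>e\<in>deg_paths q V. (s t * s e) * a * invol (s e))"
    "\<Phi> q a * invol (s t) = (\<Sum>e\<in>deg_paths q V. s e * a * invol (s t * s e))"
    unfolding Phi_eq_sum_deg_paths[OF assms]
    by (simp_all add: sum_distrib_left sum_distrib_right mult.assoc invol_mult)
  then show "s t * \<Phi> q a = 0 \<and> \<Phi> q a * invol (s t) = 0"
    using zero by (auto intro!: sum.neutral)
qed

lemma bij_betw_cmp_deg_paths:
  "bij_betw (\<lambda>x. cmp (fst x) (snd x))
     {x \<in> deg_paths p (rng ` deg_paths q V) \<times> deg_paths q V. src (fst x) = rng (snd x)}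
     (deg_paths (\<lambda>i. p i + q i) V)"
proof (rule bij_betw_imageI)
  show "inj_on (\<lambda>x. cmp (fst x) (snd x))
      {x \<in> deg_paths p (rng ` deg_paths q V) \<times> deg_paths q V. src (fst x) = rng (snd x)}"
    using factorisation_unique by (intro inj_onI) (auto simp: deg_paths_def prod_eq_iff)
  show "(\<lambda>x. cmp (fst x) (snd x)) `
      {x \<in> deg_paths p (rng ` deg_paths q V) \<times> deg_paths q V. src (fst x) = rng (snd x)}
      = deg_paths (\<lambda>i. p i + q i) V"
  proof (intro equalityI subsetI)
    fix z assume "z \<in> (\<lambda>x. cmp (fst x) (snd x)) `
      {x \<in> deg_paths p (rng ` deg_paths q V) \<times> deg_paths q V. src (fst x) = rng (snd x)}"
    then show "z \<in> deg_paths (\<lambda>i. p i + q i) V"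
      using cmp_in_L d_cmp src_cmp by (auto simp: deg_paths_def)
  next
    fix z assume z: "z \<in> deg_paths (\<lambda>i. p i + q i) V"
    then obtain t e where te: "t \<in> L" "e \<in> L" "src t = rng e" "cmp t e = z" "d t = p" "d e = q"
      using factorisation[of z p q] by (auto simp: deg_paths_def)
    then have "e \<in> deg_paths q V"
      using z src_cmp[of t e] by (auto simp: deg_paths_def)
    with te show "z \<in> (\<lambda>x. cmp (fst x) (snd x)) `
      {x \<in> deg_paths p (rng ` deg_paths q V) \<times> deg_paths q V. src (fst x) = rng (snd x)}"
      by (intro image_eqI[of _ _ "(t, e)"]) (auto simp: deg_paths_def)
  qed
qed

lemma Phi_add_degree:
  assumes "a \<in> D"
  shows "\<Phi> (\<lambda>i. p i + q i) a = \<Phi> p (\<Phi> q a)"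
proof -
  obtain V where V: "finite V" "V \<subseteq> vertices L d" "supported_over a V"
    using diag_span_supported_over[OF assms] by metis
  define W where "W = rng ` deg_paths q V"
  define g where "g z = s z * a * invol (s z)" for z
  have W: "finite W" "W \<subseteq> vertices L d"
    unfolding W_def using finite_deg_paths[OF V(1,2)] rng_vertex by (auto simp: deg_paths_def)
  have "\<Phi> p (\<Phi> q a) = (\<Sum>t\<in>deg_paths p W. s t * \<Phi> q a * invol (s t))"
    by (rule Phi_eq_sum_deg_paths[OF W supported_over_Phi[OF V, of q, folded W_def]])
  also have "\<dots> = (\<Sum>t\<in>deg_paths p W. \<Sum>e\<in>deg_paths q V. s t * g e * invol (s t))"
    unfolding Phi_eq_sum_deg_paths[OF V] g_def by (simp add: sum_distrib_left sum_distrib_right)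
  also have "\<dots> = (\<Sum>x\<in>deg_paths p W \<times> deg_paths q V.
      if src (fst x) = rng (snd x) then g (cmp (fst x) (snd x)) else 0)"
    unfolding sum.cartesian_product g_def
    using s_conj_s_conj by (intro sum.cong) (auto simp: deg_paths_def)
  also have "\<dots> = (\<Sum>x\<in>{x \<in> deg_paths p W \<times> deg_paths q V. src (fst x) = rng (snd x)}.
      g (cmp (fst x) (snd x)))"
    using finite_deg_paths[OF V(1,2)] finite_deg_paths[OF W] by (simp add: sum.inter_filter)
  also have "\<dots> = (\<Sum>z\<in>deg_paths (\<lambda>i. p i + q i) V. g z)"
    unfolding W_def by (rule sum.reindex_bij_betw[OF bij_betw_cmp_deg_paths])
  also have "\<dots> = \<Phi> (\<lambda>i. p i + q i) a"
    unfolding g_def Phi_eq_sum_deg_paths[OF V] ..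
  finally show ?thesis
    by simp
qed

lemma Phi_extends_to_action:
  "\<exists>Psi :: ('k \<Rightarrow> nat) \<Rightarrow> 'a \<Rightarrow> 'a.
     (\<forall>p. star_hom_on (closure D) (Psi p) \<and> continuous_on (closure D) (Psi p)
          \<and> Psi p ` closure D \<subseteq> closure D \<and> (\<forall>a\<in>D. Psi p a = \<Phi> p a))
   \<and> (\<forall>a\<in>closure D. Psi (\<lambda>_. 0) a = a)
   \<and> (\<forall>p q. \<forall>a\<in>closure D. Psi (\<lambda>i. p i + q i) a = Psi p (Psi q a))"
proof -
  have "\<forall>p. \<exists>g. 1-lipschitz_on (closure D) g \<and> (\<forall>a\<in>D. g a = \<Phi> p a)"
    using lipschitz_extend_closure[OF lipschitz_Phi] by blast
  then obtain Psi where lip: "\<And>p. 1-lipschitz_on (closure D) (Psi p)"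
    and ext: "\<And>p a. a \<in> D \<Longrightarrow> Psi p a = \<Phi> p a"
    by metis
  have cont: "continuous_on (closure D) (Psi p)" for p
    using lip by (rule lipschitz_on_continuous_on)
  have image: "Psi p ` closure D \<subseteq> closure D" for p
    using ext Phi_in_diag_span closure_subset[of D]
    by (intro image_closure_subset[OF cont closed_closure]) auto
  have "star_hom_on (closure D) (Psi p)" for p
    using star_hom_on_closure[OF star_subalgebra_diag_span star_hom_on_Phi cont] ext by blast
  moreover have "Psi (\<lambda>_. 0) a = a" if "a \<in> closure D" for a
    using continuous_on_closure_eq[OF cont continuous_on_id _ that] ext Phi_zero_degree by simp
  moreover have "Psi (\<lambda>i. p i + q i) a = Psi p (Psi q a)" if "a \<in> closure D" for p q a
  proof (rule continuous_on_closure_eq[OF cont _ _ that])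
    show "continuous_on (closure D) (\<lambda>a. Psi p (Psi q a))"
      using continuous_on_compose[OF cont continuous_on_subset[OF cont image]]
      by (simp add: comp_def)
    show "Psi (\<lambda>i. p i + q i) x = Psi p (Psi q x)" if "x \<in> D" for x
      using that ext Phi_in_diag_span Phi_add_degree by simp
  qed
  ultimately show ?thesis
    using cont image ext by blast
qed

end

theorem lemma5p1:
  fixes L :: "'m set"
    and rng src :: "'m \<Rightarrow> 'm"
    and cmp :: "'m \<Rightarrow> 'm \<Rightarrow> 'm"
    and d :: "'m \<Rightarrow> ('k::finite \<Rightarrow> nat)"
    and s :: "'m \<Rightarrow> 'a::cstar_algebra"
  assumes "is_kgraph L rng src cmp d"
    and "locally_finite_no_sources_sinks L rng src d"
    and "universal_CK_family TYPE('b::cstar_algebra) L rng src cmp d s"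
  shows "(\<forall>a\<in>diag_span L s. \<forall>p. finite {eta \<in> L. d eta = p \<and> s eta * a * invol (s eta) \<noteq> 0})
       \<and> (\<forall>a\<in>diag_span L s. \<forall>p. Phi L d s p a \<in> diag_span L s)
       \<and> (\<forall>a\<in>diag_span L s. \<forall>p. norm (Phi L d s p a) = norm a)
       \<and> (\<exists>Psi :: ('k \<Rightarrow> nat) \<Rightarrow> 'a \<Rightarrow> 'a.
            (\<forall>p. star_hom_on (closure (diag_span L s)) (Psi p)
                 \<and> continuous_on (closure (diag_span L s)) (Psi p)
                 \<and> Psi p ` closure (diag_span L s) \<subseteq> closure (diag_span L s)
                 \<and> (\<forall>a\<in>diag_span L s. Psi p a = Phi L d s p a))
          \<and> (\<forall>a\<in>closure (diag_span L s). Psi (\<lambda>_. 0) a = a)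
          \<and> (\<forall>p q. \<forall>a\<in>closure (diag_span L s). Psi (\<lambda>i. p i + q i) a = Psi p (Psi q a)))"
proof -
  have "CK_family L rng src cmp d s"
    using assms(3) unfolding universal_CK_family_def by blast
  then interpret kgraph_CK_family L rng src cmp d s
    using assms(1,2) by unfold_locales
  show ?thesis
    using finite_Phi_support Phi_in_diag_span norm_Phi Phi_extends_to_action by blast
qed

end
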